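(* For $n\ge 0$ let $P^{(2)}_n(z_1,z_2)=\sum_{\pi} z_1^{a_1(\pi)}z_2^{a_2(\pi)}$, the sum over all multiset set-partitions $\pi$ of the multiset $\{1^2,2^2,\dots,n^2\}$ (each of $1,\dots,n$ appearing exactly twice); in particular $P^{(2)}_0=1$. Let $D_1=\partial/\partial z_1$, $D_2=\partial/\partial z_2$ and let $\mathcal{D}_2$ be the partial differential operator $$\mathcal{D}_2= z_2D_2+\tfrac12 z_1^4D_2^2+z_1^3D_1D_2+\tfrac12 z_1^2D_1^2+z_1^3D_2+z_1^2D_1+z_2 ,$$ where each term acts by first applying the indicated derivatives and then multiplying by the indicated monomial. Then for all $n\ge1$, $$P^{(2)}_n(z_1,z_2)=\mathcal{D}_2\,P^{(2)}_{n-1}(z_1,z_2).$$ Consequently the number of multiset set-partitions of $\{1^2,\dots,n^2\}$ equals $P^{(2)}_n(1,1)$.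
   Context: A multiset set-partition of a finite multiset $M$ is a finite multiset of nonempty sets (ordinary sets, no repeated elements inside a set) whose multiset union equals $M$; the same set may occur several times in the partition, and the partition is unordered. For a multiset set-partition $\pi$ and $i\ge1$, $a_i(\pi)$ denotes the number of distinct sets that occur in $\pi$ exactly $i$ times. *)

theory Defs
  imports "HOL-Analysis.Analysis" "HOL-Library.Multiset"
begin

definition mset_set_partitions :: "'a multiset \<Rightarrow> 'a set multiset set" where
  "mset_set_partitions M =
     {\<pi>. (\<forall>S \<in># \<pi>. S \<noteq> {} \<and> finite S) \<and> sum_mset (image_mset mset_set \<pi>) = M}"

definition mult_count :: "nat \<Rightarrow> 'a set multiset \<Rightarrow> nat" where
  "mult_count i \<pi> = card {S \<in> set_mset \<pi>. count \<pi> S = i}"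

definition double_mset :: "nat \<Rightarrow> nat multiset" where
  "double_mset n = (\<Sum>i\<in>{1..n}. {#i, i#})"

definition P2 :: "nat \<Rightarrow> real \<Rightarrow> real \<Rightarrow> real" where
  "P2 n z1 z2 = (\<Sum>\<pi>\<in>mset_set_partitions (double_mset n).
                   z1 ^ mult_count 1 \<pi> * z2 ^ mult_count 2 \<pi>)"

definition D2op :: "(real \<Rightarrow> real \<Rightarrow> real) \<Rightarrow> real \<Rightarrow> real \<Rightarrow> real" where
  "D2op f z1 z2 =
      z2 * deriv (\<lambda>t. f z1 t) z2
    + (1/2) * z1 ^ 4 * deriv (\<lambda>t. deriv (\<lambda>s. f z1 s) t) z2
    + z1 ^ 3 * deriv (\<lambda>u. deriv (\<lambda>t. f u t) z2) z1
    + (1/2) * z1 ^ 2 * deriv (\<lambda>u. deriv (\<lambda>v. f v z2) u) z1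
    + z1 ^ 3 * deriv (\<lambda>t. f z1 t) z2
    + z1 ^ 2 * deriv (\<lambda>u. f u z2) z1
    + z2 * f z1 z2"

end

theory Submission
  imports Defs
begin

text \<open>
  Write M = {1^2, ..., m^2} and x = m + 1.  Every multiset set-partition
  \<pi> of M + {x, x} arises from exactly one partition \<rho> of M by choosing a sub-multiset X
  of at most two blocks of \<rho>, adding x to the chosen blocks and adding 2 - |X| copies
  of the singleton {x} (section "Adding a new element twice").  Since every element of M
  occurs twice, every block of \<rho> occurs once or twice, and the statistics a_1, a_2 of \<pi>
  depend only on a_1(\<rho>), a_2(\<rho>) and on how many chosen blocks are single or doubled
  (section "How the multiplicity statistics change").  Counting the choices by binomial
  coefficients shows that the sum of z1^a_1 z2^a_2 over the partitions obtained from \<rho>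
  is a polynomial growth_poly a_1(\<rho>) a_2(\<rho>) (section "Counting the ways to attach"),
  and a direct computation identifies growth_poly a b with the operator D_2 applied to
  the monomial z1^a z2^b (section "The differential operator").  Summing over \<rho> gives
  P_{m+1} = D_2 P_m; the remaining claims are immediate from the definitions.
\<close>

section \<open>Partitions of a multiset into sets\<close>

abbreviation block_union :: "'a set multiset \<Rightarrow> 'a multiset" where
  "block_union \<pi> \<equiv> sum_mset (image_mset mset_set \<pi>)"

lemma count_block_union:
  assumes "\<forall>S\<in>#\<pi>. finite S"
  shows "count (block_union \<pi>) y = size (filter_mset (\<lambda>S. y \<in> S) \<pi>)"
  using assms by (induction \<pi>) (auto simp: count_mset_set')

text \<open>Every block is nonempty, so there are at most as many blocks as elements.\<close>
lemma size_le_size_block_union: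
  assumes "\<forall>S\<in>#\<pi>. S \<noteq> {} \<and> finite S"
  shows "size \<pi> \<le> size (block_union \<pi>)"
  using assms
proof (induction \<pi>)
  case (add S \<pi>)
  then have "card S \<ge> 1" by (simp add: Suc_leI card_gt_0_iff)
  with add show ?case by simp
qed simp

text \<open>A block B occurs in a partition of M at most as often as any of its
  elements y occurs in M, since each copy of B contributes one copy of y.\<close>
lemma block_count_le:
  assumes "\<pi> \<in> mset_set_partitions M" "y \<in> S"
  shows "count \<pi> S \<le> count M y"
proof -
  have "\<forall>S\<in>#\<pi>. finite S" "block_union \<pi> = M"
    using assms(1) by (auto simp: mset_set_partitions_def)
  have "count \<pi> S = count (filter_mset (\<lambda>T. y \<in> T) \<pi>) S" using assms(2) by simp
  also have "\<dots> \<le> size (filter_mset (\<lambda>T. y \<in> T) \<pi>)" by (rule count_le_size)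
  also have "\<dots> = count M y"
    using count_block_union[of \<pi> y] \<open>\<forall>S\<in>#\<pi>. finite S\<close> \<open>block_union \<pi> = M\<close> by simp
  finally show ?thesis .
qed

lemma partition_block_subset:
  assumes "\<pi> \<in> mset_set_partitions M" "S \<in># \<pi>"
  shows "S \<subseteq> set_mset M"
proof
  fix y assume "y \<in> S"
  with assms(1) have "count \<pi> S \<le> count M y" by (rule block_count_le)
  moreover have "count \<pi> S > 0" using assms(2) by simp
  ultimately have "count M y > 0" by linarith
  then show "y \<in># M" by (rule count_greater_zero_iff[THEN iffD1])
qed

text \<open>A partition of M has at most size M blocks, all subsets of the support of M;
  hence there are only finitely many partitions.\<close>
lemma finite_mset_set_partitions: "finite (mset_set_partitions M)"
proof (rule finite_subset)
  show "mset_set_partitions M \<subseteq> (\<Union>k\<le>size M. multisets_of_size (Pow (set_mset M)) k)"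
  proof
    fix \<pi> assume \<pi>: "\<pi> \<in> mset_set_partitions M"
    then have "size \<pi> \<le> size M"
      using size_le_size_block_union[of \<pi>] by (auto simp: mset_set_partitions_def)
    moreover have "set_mset \<pi> \<subseteq> Pow (set_mset M)"
      using partition_block_subset[OF \<pi>] by blast
    ultimately show "\<pi> \<in> (\<Union>k\<le>size M. multisets_of_size (Pow (set_mset M)) k)"
      by (auto simp: multisets_of_size_def)
  qed
qed auto

lemma partition_blocks_avoid:
  assumes "\<rho> \<in> mset_set_partitions M" "x \<notin># M"
  shows "\<forall>S\<in>#\<rho>. S \<noteq> {} \<and> x \<notin> S"
  using assms partition_block_subset[OF assms(1)] by (auto simp: mset_set_partitions_def)

lemma partition_count_le:
  assumes "\<rho> \<in> mset_set_partitions M" "\<forall>y. count M y \<le> k"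
  shows "\<forall>S. count \<rho> S \<le> k"
proof
  fix S show "count \<rho> S \<le> k"
  proof (cases "S \<in># \<rho>")
    case True
    then obtain y where "y \<in> S" using assms(1) by (auto simp: mset_set_partitions_def)
    then show ?thesis using block_count_le[OF assms(1)] assms(2) le_trans by blast
  qed (simp add: not_in_iff)
qed

lemma mset_set_partitions_empty: "mset_set_partitions ({#} :: 'a multiset) = {{#}}"
proof
  show "mset_set_partitions ({#} :: 'a multiset) \<subseteq> {{#}}"
  proof
    fix \<pi> :: "'a set multiset" assume "\<pi> \<in> mset_set_partitions {#}"
    then have "size \<pi> \<le> size (block_union \<pi>)" "block_union \<pi> = {#}"
      using size_le_size_block_union[of \<pi>] by (auto simp: mset_set_partitions_def)
    then show "\<pi> \<in> {{#}}" by simp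
  qed
qed (simp add: mset_set_partitions_def)

section \<open>Adding a new element twice\<close>

text \<open>Every partition of M + {x, x} (with x not in M) arises from a unique partition
  \<rho> of M by choosing a sub-multiset X of at most two blocks of \<rho>, adding x to each
  of them, and filling up with copies of the singleton {x} so that x occurs twice.\<close>
definition attach :: "'a \<Rightarrow> 'a set multiset \<Rightarrow> 'a set multiset \<Rightarrow> 'a set multiset" where
  "attach x \<rho> X = (\<rho> - X) + image_mset (insert x) X + replicate_mset (2 - size X) {x}"

definition attach_choices :: "'a set multiset \<Rightarrow> 'a set multiset set" where
  "attach_choices \<rho> = {X. X \<subseteq># \<rho> \<and> size X \<le> 2}"

text \<open>The inverse operations: delete x from every block, resp. recover the modified blocks.\<close>
definition detach :: "'a \<Rightarrow> 'a set multiset \<Rightarrow> 'a set multiset" where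
  "detach x \<pi> = filter_mset (\<lambda>S. S \<noteq> {}) (image_mset (\<lambda>S. S - {x}) \<pi>)"

definition attached_blocks :: "'a \<Rightarrow> 'a set multiset \<Rightarrow> 'a set multiset" where
  "attached_blocks x \<pi> = image_mset (\<lambda>S. S - {x}) (filter_mset (\<lambda>S. x \<in> S \<and> S \<noteq> {x}) \<pi>)"

lemma block_union_attach:
  assumes "\<forall>S\<in>#\<rho>. finite S \<and> x \<notin> S" "X \<subseteq># \<rho>" "size X \<le> 2"
  shows "block_union (attach x \<rho> X) = block_union \<rho> + {#x, x#}"
proof -
  have X: "\<forall>S\<in>#X. finite S \<and> x \<notin> S" using assms(1,2) by (meson mset_subset_eqD)
  then have "block_union (image_mset (insert x) X) = block_union X + replicate_mset (size X) x"
    by (induction X) auto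
  moreover have "block_union (replicate_mset k {x}) = replicate_mset k x" for k
    by (induction k) auto
  moreover have "replicate_mset (size X) x + replicate_mset (2 - size X) x = {#x, x#}"
    using assms(3) by (intro multiset_eqI) auto
  moreover have "block_union \<rho> = block_union (\<rho> - X) + block_union X"
    using assms(2) by (metis image_mset_union subset_mset.diff_add sum_mset.union)
  ultimately show ?thesis by (simp add: attach_def add_ac)
qed

lemma attach_partition:
  assumes \<rho>: "\<rho> \<in> mset_set_partitions M" and x: "x \<notin># M" and X: "X \<in> attach_choices \<rho>"
  shows "attach x \<rho> X \<in> mset_set_partitions (M + {#x, x#})"
proof -
  have blocks: "\<forall>S\<in>#\<rho>. S \<noteq> {} \<and> finite S \<and> x \<notin> S"
    using \<rho> partition_blocks_avoid[OF \<rho> x] by (auto simp: mset_set_partitions_def)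
  then have "block_union (attach x \<rho> X) = M + {#x, x#}"
    using \<rho> X block_union_attach[of \<rho> x X] by (simp add: mset_set_partitions_def attach_choices_def)
  moreover have "S \<noteq> {} \<and> finite S" if "S \<in># attach x \<rho> X" for S
    using that blocks X
    by (auto simp: attach_def attach_choices_def split: if_splits dest: in_diffD mset_subset_eqD)
  ultimately show ?thesis by (simp add: mset_set_partitions_def)
qed

lemma detach_attach:
  assumes "\<forall>S\<in>#\<rho>. S \<noteq> {} \<and> x \<notin> S" "X \<subseteq># \<rho>"
  shows "detach x (attach x \<rho> X) = \<rho>"
proof -
  have X: "\<forall>S\<in>#X. S \<noteq> {} \<and> x \<notin> S" and rest: "\<forall>S\<in>#\<rho> - X. S \<noteq> {} \<and> x \<notin> S"
    using assms by (meson mset_subset_eqD in_diffD)+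
  have "image_mset (\<lambda>S. S - {x}) (\<rho> - X) = image_mset id (\<rho> - X)"
    by (rule image_mset_cong) (use rest in auto)
  moreover have "image_mset (\<lambda>S. S - {x}) (image_mset (insert x) X) = image_mset id X"
    unfolding image_mset.compositionality by (rule image_mset_cong) (use X in auto)
  ultimately have "detach x (attach x \<rho> X) = filter_mset (\<lambda>S. S \<noteq> {}) ((\<rho> - X) + X)"
    by (simp add: detach_def attach_def)
  also have "\<dots> = \<rho>" using assms by (simp add: filter_mset_eq_conv)
  finally show ?thesis .
qed

lemma attached_blocks_attach:
  assumes "\<forall>S\<in>#\<rho>. S \<noteq> {} \<and> x \<notin> S" "X \<subseteq># \<rho>"
  shows "attached_blocks x (attach x \<rho> X) = X"
proof -
  have X: "\<forall>S\<in>#X. S \<noteq> {} \<and> x \<notin> S" and rest: "\<forall>S\<in>#\<rho> - X. x \<notin> S"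
    using assms by (meson mset_subset_eqD in_diffD)+
  let ?P = "\<lambda>S. x \<in> S \<and> S \<noteq> {x}"
  have "filter_mset ?P (\<rho> - X) = {#}" "filter_mset ?P (replicate_mset k {x}) = {#}" for k
    unfolding filter_mset_eq_mempty_iff using rest by auto
  moreover have "filter_mset ?P (image_mset (insert x) X) = image_mset (insert x) X"
    by (rule filter_mset_eq_conv[THEN iffD2]) (use X in auto)
  ultimately have "filter_mset ?P (attach x \<rho> X) = image_mset (insert x) X"
    by (simp only: attach_def filter_union_mset add_0 add_0_right)
  moreover have "image_mset (\<lambda>S. S - {x}) (image_mset (insert x) X) = image_mset id X"
    unfolding image_mset.compositionality by (rule image_mset_cong) (use X in auto)
  ultimately show ?thesis by (simp add: attached_blocks_def)
qed

text \<open>Surjectivity: split a partition \<pi> of M + {x, x} into the blocks Q avoiding x,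
  the blocks X' that contain x together with other elements, and copies of {x}.
  Removing x from X' gives X, and \<pi> is obtained from \<rho> = Q + X by attaching x to X.\<close>
lemma partition_add_pair_is_attach:
  assumes \<pi>: "\<pi> \<in> mset_set_partitions (M + {#x, x#})" and x: "x \<notin># M"
  obtains \<rho> X where "\<rho> \<in> mset_set_partitions M" "X \<in> attach_choices \<rho>" "\<pi> = attach x \<rho> X"
proof -
  have blocks: "\<forall>S\<in>#\<pi>. S \<noteq> {} \<and> finite S" and union: "block_union \<pi> = M + {#x, x#}"
    using \<pi> by (auto simp: mset_set_partitions_def)
  define Q where "Q = filter_mset (\<lambda>S. x \<notin> S) \<pi>"
  define X where "X = attached_blocks x \<pi>"
  define k where "k = count \<pi> {x}"
  have ins: "image_mset (insert x) X = filter_mset (\<lambda>S. x \<in> S \<and> S \<noteq> {x}) \<pi>"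
    unfolding X_def attached_blocks_def image_mset.compositionality
    by (rule trans[OF image_mset_cong image_mset_id]) auto
  have \<pi>_split: "\<pi> = Q + image_mset (insert x) X + replicate_mset k {x}"
    unfolding ins Q_def k_def by (rule multiset_eqI) auto
  have "count (M + {#x, x#}) x = size (filter_mset (\<lambda>S. x \<in> S) \<pi>)"
    using count_block_union[of \<pi> x] blocks union by simp
  also have "filter_mset (\<lambda>S. x \<in> S) \<pi> = image_mset (insert x) X + replicate_mset k {x}"
    unfolding ins k_def by (rule multiset_eqI) auto
  finally have "count (M + {#x, x#}) x = size X + k" by simp
  moreover have "count M x = 0" using x by (rule not_in_iff[THEN iffD1])
  ultimately have size_X: "size X + k = 2" by simp
  define \<rho> where "\<rho> = Q + X"
  have \<rho>_blocks: "\<forall>S\<in>#\<rho>. S \<noteq> {} \<and> finite S \<and> x \<notin> S"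
    using blocks by (auto simp: \<rho>_def Q_def X_def attached_blocks_def)
  have choice: "X \<in> attach_choices \<rho>" using size_X by (simp add: attach_choices_def \<rho>_def)
  have "k = 2 - size X" using size_X by simp
  then have attach: "\<pi> = attach x \<rho> X"
    using \<pi>_split by (simp add: attach_def \<rho>_def)
  have "block_union \<rho> + {#x, x#} = M + {#x, x#}"
    using block_union_attach[of \<rho> x X] \<rho>_blocks choice union attach
    by (simp add: attach_choices_def)
  then have "\<rho> \<in> mset_set_partitions M"
    using \<rho>_blocks by (simp add: mset_set_partitions_def)
  then show ?thesis using choice attach by (rule that)
qed

lemma finite_attach_choices: "finite (attach_choices \<rho>)"
proof (rule finite_subset)
  show "attach_choices \<rho> \<subseteq> (\<Union>k\<le>2. multisets_of_size (set_mset \<rho>) k)"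
    by (auto simp: attach_choices_def multisets_of_size_def dest: mset_subset_eqD)
qed auto

lemma bij_betw_attach:
  assumes x: "x \<notin># M"
  shows "bij_betw (\<lambda>(\<rho>, X). attach x \<rho> X) (SIGMA \<rho>:mset_set_partitions M. attach_choices \<rho>)
           (mset_set_partitions (M + {#x, x#}))"
proof (rule bij_betw_byWitness[where f' = "\<lambda>\<pi>. (detach x \<pi>, attached_blocks x \<pi>)"])
  show "\<forall>p\<in>SIGMA \<rho>:mset_set_partitions M. attach_choices \<rho>.
      (\<lambda>\<pi>. (detach x \<pi>, attached_blocks x \<pi>)) ((\<lambda>(\<rho>, X). attach x \<rho> X) p) = p"
    using partition_blocks_avoid[OF _ x]
    by (auto simp: attach_choices_def detach_attach attached_blocks_attach)
  show "(\<lambda>(\<rho>, X). attach x \<rho> X) ` (SIGMA \<rho>:mset_set_partitions M. attach_choices \<rho>)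
      \<subseteq> mset_set_partitions (M + {#x, x#})"
    using attach_partition[OF _ x] by auto
  show "\<forall>\<pi>\<in>mset_set_partitions (M + {#x, x#}).
      (\<lambda>(\<rho>, X). attach x \<rho> X) (detach x \<pi>, attached_blocks x \<pi>) = \<pi>"
  proof
    fix \<pi> assume "\<pi> \<in> mset_set_partitions (M + {#x, x#})"
    then obtain \<rho> X where "\<rho> \<in> mset_set_partitions M" "X \<in> attach_choices \<rho>" "\<pi> = attach x \<rho> X"
      using x by (rule partition_add_pair_is_attach)
    then show "(\<lambda>(\<rho>, X). attach x \<rho> X) (detach x \<pi>, attached_blocks x \<pi>) = \<pi>"
      using partition_blocks_avoid[OF _ x]
      by (simp add: attach_choices_def detach_attach attached_blocks_attach)
  qed
  show "(\<lambda>\<pi>. (detach x \<pi>, attached_blocks x \<pi>)) ` mset_set_partitions (M + {#x, x#})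
      \<subseteq> (SIGMA \<rho>:mset_set_partitions M. attach_choices \<rho>)"
  proof
    fix p assume "p \<in> (\<lambda>\<pi>. (detach x \<pi>, attached_blocks x \<pi>)) ` mset_set_partitions (M + {#x, x#})"
    then obtain \<pi> where \<pi>: "\<pi> \<in> mset_set_partitions (M + {#x, x#})"
      and p: "p = (detach x \<pi>, attached_blocks x \<pi>)" by blast
    obtain \<rho> X where "\<rho> \<in> mset_set_partitions M" "X \<in> attach_choices \<rho>" "\<pi> = attach x \<rho> X"
      using \<pi> x by (rule partition_add_pair_is_attach)
    then show "p \<in> (SIGMA \<rho>:mset_set_partitions M. attach_choices \<rho>)"
      using partition_blocks_avoid[OF _ x]
      by (simp add: p attach_choices_def detach_attach attached_blocks_attach)
  qed
qed

lemma sum_partitions_add_pair: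
  fixes g :: "'a set multiset \<Rightarrow> 'b::comm_monoid_add"
  assumes x: "x \<notin># M"
  shows "(\<Sum>\<pi>\<in>mset_set_partitions (M + {#x, x#}). g \<pi>)
       = (\<Sum>\<rho>\<in>mset_set_partitions M. \<Sum>X\<in>attach_choices \<rho>. g (attach x \<rho> X))"
proof -
  have "(\<Sum>\<pi>\<in>mset_set_partitions (M + {#x, x#}). g \<pi>)
      = (\<Sum>(\<rho>, X)\<in>(SIGMA \<rho>:mset_set_partitions M. attach_choices \<rho>). g (attach x \<rho> X))"
    using sum.reindex_bij_betw[OF bij_betw_attach[OF x], of g] by (simp add: case_prod_unfold)
  also have "\<dots> = (\<Sum>\<rho>\<in>mset_set_partitions M. \<Sum>X\<in>attach_choices \<rho>. g (attach x \<rho> X))"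
    by (rule sum.Sigma[symmetric]) (auto intro: finite_mset_set_partitions finite_attach_choices)
  finally show ?thesis .
qed

section \<open>How the multiplicity statistics change\<close>

definition mult_blocks :: "nat \<Rightarrow> 'a multiset \<Rightarrow> 'a set" where
  "mult_blocks i \<rho> = {S \<in> set_mset \<rho>. count \<rho> S = i}"

lemma mult_count_eq_card: "mult_count i \<rho> = card (mult_blocks i \<rho>)"
  by (simp add: mult_count_def mult_blocks_def)

lemma mult_blocks_pos: "0 < i \<Longrightarrow> mult_blocks i \<rho> = {S. count \<rho> S = i}"
  unfolding mult_blocks_def by (metis (lifting) count_greater_zero_iff)

lemma mult_blocks_1: "mult_blocks 1 \<rho> = {S. count \<rho> S = 1}"
  and mult_blocks_2: "mult_blocks 2 \<rho> = {S. count \<rho> S = 2}"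
  by (simp_all add: mult_blocks_pos)

lemma finite_mult_blocks: "finite (mult_blocks i \<rho>)"
  by (simp add: mult_blocks_def)

lemma set_mset_mult_blocks:
  assumes "\<forall>S. count \<rho> S \<le> 2"
  shows "set_mset \<rho> = mult_blocks 1 \<rho> \<union> mult_blocks 2 \<rho>"
proof -
  have "count \<rho> S = 1 \<or> count \<rho> S = 2" if "S \<in># \<rho>" for S
  proof -
    have "0 < count \<rho> S" "count \<rho> S \<le> 2" using that assms by auto
    then show ?thesis by arith
  qed
  then show ?thesis by (auto simp: mult_blocks_def)
qed

lemma mult_count_add_disjoint:
  assumes "set_mset A \<inter> set_mset B = {}" "0 < i"
  shows "mult_count i (A + B) = mult_count i A + mult_count i B"
proof -
  have "count B S = 0" if "S \<in># A" for S
    using assms(1) that by (meson disjoint_iff not_in_iff)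
  moreover have "count A S = 0" if "S \<in># B" for S
    using assms(1) that by (meson disjoint_iff not_in_iff)
  ultimately have "mult_blocks i (A + B) = mult_blocks i A \<union> mult_blocks i B"
    by (auto simp: mult_blocks_def)
  moreover have "mult_blocks i A \<inter> mult_blocks i B = {}"
    using assms(1) by (auto simp: mult_blocks_def)
  ultimately show ?thesis
    by (simp add: mult_count_eq_card card_Un_disjoint finite_mult_blocks)
qed

lemma mult_count_image_inj:
  assumes "inj_on f (set_mset A)"
  shows "mult_count i (image_mset f A) = mult_count i A"
proof -
  have "count (image_mset f A) (f S) = count A S" if "S \<in># A" for S
  proof -
    have "f -` {f S} \<inter> set_mset A = {S}" using assms that by (auto dest: inj_onD)
    then show ?thesis by (simp add: count_image_mset)
  qed
  then have "mult_blocks i (image_mset f A) = f ` mult_blocks i A"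
    by (force simp: mult_blocks_def)
  moreover have "inj_on f (mult_blocks i A)"
    using assms by (rule inj_on_subset) (auto simp: mult_blocks_def)
  ultimately show ?thesis by (simp add: mult_count_eq_card card_image)
qed

lemma mult_count_replicate:
  "0 < i \<Longrightarrow> mult_count i (replicate_mset k S) = of_bool (k = i)"
  by (auto simp: mult_count_eq_card mult_blocks_def)

text \<open>Attaching x to X: the blocks of \<rho> - X, the enlarged blocks and the copies of {x}
  are pairwise different, so their statistics add up.\<close>
lemma mult_count_attach:
  assumes "\<forall>S\<in>#\<rho>. S \<noteq> {} \<and> x \<notin> S" "X \<subseteq># \<rho>" "0 < i"
  shows "mult_count i (attach x \<rho> X) =
    mult_count i (\<rho> - X) + mult_count i X + of_bool (2 - size X = i)"
proof -
  have X: "\<forall>S\<in>#X. S \<noteq> {} \<and> x \<notin> S" and rest: "\<forall>S\<in>#\<rho> - X. x \<notin> S"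
    using assms by (meson mset_subset_eqD in_diffD)+
  have "inj_on (insert x) (set_mset X)"
    using X by (intro inj_onI) (metis Diff_insert_absorb)
  then have "mult_count i (image_mset (insert x) X) = mult_count i X"
    by (rule mult_count_image_inj)
  moreover have "set_mset (\<rho> - X) \<inter> set_mset (image_mset (insert x) X) = {}"
    using rest by auto
  moreover have "set_mset (\<rho> - X + image_mset (insert x) X)
      \<inter> set_mset (replicate_mset (2 - size X) {x}) = {}"
    using rest X by (auto simp: insert_ident)
  ultimately show ?thesis
    using assms(3) by (simp add: attach_def mult_count_add_disjoint mult_count_replicate)
qed

text \<open>Removing a set U of distinct blocks from \<rho> (all multiplicities at most 2): the
  blocks of U occurring once disappear, those occurring twice become single.\<close>
lemma mult_count_diff_set:
  assumes le2: "\<forall>S. count \<rho> S \<le> 2" and U: "U \<subseteq> set_mset \<rho>"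
  shows "mult_count 1 (\<rho> - mset_set U)
           = mult_count 1 \<rho> - card (U \<inter> mult_blocks 1 \<rho>) + card (U \<inter> mult_blocks 2 \<rho>)"
    and "mult_count 2 (\<rho> - mset_set U) = mult_count 2 \<rho> - card (U \<inter> mult_blocks 2 \<rho>)"
proof -
  have fin: "finite U" using U by (rule finite_subset) simp
  have counts: "count \<rho> S = 0 \<or> count \<rho> S = 1 \<or> count \<rho> S = 2" for S
    using le2[rule_format, of S] by arith
  have pos: "count \<rho> S \<noteq> 0" if "S \<in> U" for S using U that by auto
  have "mult_blocks 1 (\<rho> - mset_set U) = (mult_blocks 1 \<rho> - U) \<union> (U \<inter> mult_blocks 2 \<rho>)"
  proof (rule set_eqI)
    fix S show "S \<in> mult_blocks 1 (\<rho> - mset_set U) \<longleftrightarrow> S \<in> (mult_blocks 1 \<rho> - U) \<union> (U \<inter> mult_blocks 2 \<rho>)"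
      unfolding mult_blocks_1 mult_blocks_2
      using counts[of S] pos[of S] by (auto simp: count_mset_set' fin)
  qed
  moreover have "mult_blocks 2 (\<rho> - mset_set U) = mult_blocks 2 \<rho> - U"
  proof (rule set_eqI)
    fix S show "S \<in> mult_blocks 2 (\<rho> - mset_set U) \<longleftrightarrow> S \<in> mult_blocks 2 \<rho> - U"
      unfolding mult_blocks_2 using counts[of S] pos[of S] by (auto simp: count_mset_set' fin)
  qed
  moreover have "(mult_blocks 1 \<rho> - U) \<inter> (U \<inter> mult_blocks 2 \<rho>) = {}" by blast
  ultimately show "mult_count 1 (\<rho> - mset_set U)
           = mult_count 1 \<rho> - card (U \<inter> mult_blocks 1 \<rho>) + card (U \<inter> mult_blocks 2 \<rho>)"
    and "mult_count 2 (\<rho> - mset_set U) = mult_count 2 \<rho> - card (U \<inter> mult_blocks 2 \<rho>)"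
    using fin by (simp_all add: mult_count_eq_card card_Un_disjoint card_Diff_subset_Int
        finite_mult_blocks Int_commute)
qed

lemma mult_count_mset_set:
  assumes "finite U"
  shows "mult_count 1 (mset_set U) = card U" "mult_count 2 (mset_set U) = 0"
  using assms by (simp_all add: mult_count_eq_card mult_blocks_def count_mset_set')

text \<open>Attaching x to j blocks occurring once and l blocks occurring twice (j + l \<le> 2):
  each of the l blocks turns into two singletons, and the copies of {x} contribute
  a singleton if j + l = 1 and a doubleton if j + l = 0.\<close>
lemma mult_count_attach_set:
  assumes blocks: "\<forall>S\<in>#\<rho>. S \<noteq> {} \<and> x \<notin> S" and le2: "\<forall>S. count \<rho> S \<le> 2"
    and U: "U \<subseteq> set_mset \<rho>" "card U \<le> 2"
  defines "j \<equiv> card (U \<inter> mult_blocks 1 \<rho>)" and "l \<equiv> card (U \<inter> mult_blocks 2 \<rho>)"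
  shows "mult_count 1 (attach x \<rho> (mset_set U)) = mult_count 1 \<rho> + 2 * l + of_bool (j + l = 1)"
    and "mult_count 2 (attach x \<rho> (mset_set U)) = mult_count 2 \<rho> - l + of_bool (j + l = 0)"
proof -
  have fin: "finite U" using U(1) by (rule finite_subset) simp
  have sub: "mset_set U \<subseteq># \<rho>"
    using U(1) by (intro mset_subset_eqI) (auto simp: count_mset_set' Suc_le_eq)
  have split: "U = (U \<inter> mult_blocks 1 \<rho>) \<union> (U \<inter> mult_blocks 2 \<rho>)"
    using U(1) set_mset_mult_blocks[OF le2] by blast
  have "card U = card ((U \<inter> mult_blocks 1 \<rho>) \<union> (U \<inter> mult_blocks 2 \<rho>))"
    using split by simp
  also have "\<dots> = j + l"
    unfolding j_def l_def using fin by (intro card_Un_disjoint) (auto simp: mult_blocks_def)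
  finally have card_U: "card U = j + l" .
  have size_eqs: "(2 - card U = 1) = (j + l = 1)" "(2 - card U = 2) = (j + l = 0)"
    using card_U U(2) by auto
  have "j \<le> mult_count 1 \<rho>"
    unfolding j_def mult_count_eq_card by (intro card_mono finite_mult_blocks) blast
  moreover have "mult_count 1 (\<rho> - mset_set U) = mult_count 1 \<rho> - j + l"
    and "mult_count 2 (\<rho> - mset_set U) = mult_count 2 \<rho> - l"
    using mult_count_diff_set[OF le2 U(1)] unfolding j_def l_def by simp_all
  moreover have "mult_count 1 (attach x \<rho> (mset_set U))
      = mult_count 1 (\<rho> - mset_set U) + card U + of_bool (j + l = 1)"
    using mult_count_attach[OF blocks sub, of 1] mult_count_mset_set(1)[OF fin] size_eqs(1)
    by simp
  moreover have "mult_count 2 (attach x \<rho> (mset_set U))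
      = mult_count 2 (\<rho> - mset_set U) + of_bool (j + l = 0)"
    using mult_count_attach[OF blocks sub, of 2] mult_count_mset_set(2)[OF fin] size_eqs(2)
    by simp
  ultimately show "mult_count 1 (attach x \<rho> (mset_set U)) = mult_count 1 \<rho> + 2 * l + of_bool (j + l = 1)"
    and "mult_count 2 (attach x \<rho> (mset_set U)) = mult_count 2 \<rho> - l + of_bool (j + l = 0)"
    using card_U by simp_all
qed

text \<open>Attaching x to both copies of a block B occurring twice replaces the doubleton B
  by the doubleton B \<union> {x}.\<close>
lemma mult_count_attach_double:
  assumes blocks: "\<forall>S\<in>#\<rho>. S \<noteq> {} \<and> x \<notin> S" and B: "count \<rho> B = 2" and i: "0 < i"
  shows "mult_count i (attach x \<rho> {#B, B#}) = mult_count i \<rho>"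
proof -
  have sub: "{#B, B#} \<subseteq># \<rho>" using B by (intro mset_subset_eqI) auto
  have "mult_blocks i (\<rho> - {#B, B#}) = mult_blocks i \<rho> - {B}"
    using B i by (auto simp: mult_blocks_pos)
  then have removed: "mult_count i (\<rho> - {#B, B#}) = mult_count i \<rho> - of_bool (i = 2)"
    using B i by (simp add: mult_count_eq_card mult_blocks_pos finite_mult_blocks)
  have "mult_count i (attach x \<rho> {#B, B#}) = mult_count i (\<rho> - {#B, B#}) + of_bool (i = 2)"
    using mult_count_attach[OF blocks sub i] i
    by (simp add: mult_count_eq_card mult_blocks_def)
  moreover have "0 < mult_count i \<rho>" if "i = 2"
  proof -
    have "B \<in> mult_blocks i \<rho>" using that B by (simp add: mult_blocks_pos)
    then show ?thesis
      unfolding mult_count_eq_card using finite_mult_blocks[of i \<rho>] card_gt_0_iff by blast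
  qed
  ultimately show ?thesis using removed by auto
qed

section \<open>Counting the ways to attach\<close>

lemma attach_choices_split:
  assumes le2: "\<forall>S. count \<rho> S \<le> 2"
  shows "attach_choices \<rho> =
    mset_set ` {U. U \<subseteq> set_mset \<rho> \<and> card U \<le> 2} \<union> (\<lambda>B. {#B, B#}) ` mult_blocks 2 \<rho>"
proof (intro equalityI subsetI)
  fix X assume "X \<in> attach_choices \<rho>"
  then have sub: "X \<subseteq># \<rho>" and size: "size X \<le> 2" by (auto simp: attach_choices_def)
  show "X \<in> mset_set ` {U. U \<subseteq> set_mset \<rho> \<and> card U \<le> 2} \<union> (\<lambda>B. {#B, B#}) ` mult_blocks 2 \<rho>"
  proof (cases "\<exists>B. 2 \<le> count X B")
    case True
    then obtain B where B: "2 \<le> count X B" by blast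
    then have "{#B, B#} \<subseteq># X" by (intro mset_subset_eqI) auto
    then obtain C where "X = {#B, B#} + C" by (auto simp: mset_subset_eq_exists_conv)
    with size have X: "X = {#B, B#}" by simp
    have "2 \<le> count \<rho> B" using mset_subset_eq_count[OF sub, of B] by (simp add: X)
    with le2 have "count \<rho> B = 2" by (meson le_antisym)
    then show ?thesis by (simp add: X mult_blocks_2)
  next
    case False
    have "X = mset_set (set_mset X)"
    proof (rule multiset_eqI)
      fix S
      have "count X S < 2" using False by (simp add: not_le)
      then show "count X S = count (mset_set (set_mset X)) S"
        by (cases "count X S") (auto simp: count_mset_set' not_in_iff)
    qed
    moreover have "set_mset X \<subseteq> set_mset \<rho>" using sub by (rule set_mset_mono)
    moreover have "card (set_mset X) \<le> 2"
      using size by (subst (asm) \<open>X = mset_set (set_mset X)\<close>) simp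
    ultimately show ?thesis by blast
  qed
next
  fix X assume "X \<in> mset_set ` {U. U \<subseteq> set_mset \<rho> \<and> card U \<le> 2} \<union> (\<lambda>B. {#B, B#}) ` mult_blocks 2 \<rho>"
  then show "X \<in> attach_choices \<rho>"
  proof (elim UnE imageE)
    fix U assume X: "X = mset_set U" and U: "U \<in> {U. U \<subseteq> set_mset \<rho> \<and> card U \<le> 2}"
    then have "finite U" by (auto intro: finite_subset)
    with U have "mset_set U \<subseteq># \<rho>"
      by (intro mset_subset_eqI) (auto simp: count_mset_set' Suc_le_eq)
    with U \<open>finite U\<close> show ?thesis by (simp add: X attach_choices_def)
  next
    fix B assume "X = {#B, B#}" "B \<in> mult_blocks 2 \<rho>"
    then show ?thesis by (auto simp: attach_choices_def mult_blocks_2 intro!: mset_subset_eqI)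
  qed
qed

lemma card_subsets_by_parts:
  assumes "finite A" "finite B" "A \<inter> B = {}"
  shows "card {U. U \<subseteq> A \<union> B \<and> card (U \<inter> A) = j \<and> card (U \<inter> B) = l}
       = (card A choose j) * (card B choose l)"
proof -
  have "bij_betw (\<lambda>(V, W). V \<union> W) ({V. V \<subseteq> A \<and> card V = j} \<times> {W. W \<subseteq> B \<and> card W = l})
      {U. U \<subseteq> A \<union> B \<and> card (U \<inter> A) = j \<and> card (U \<inter> B) = l}"
  proof (rule bij_betw_byWitness[where f' = "\<lambda>U. (U \<inter> A, U \<inter> B)"])
    have "(V \<union> W) \<inter> A = V" "(V \<union> W) \<inter> B = W" if "V \<subseteq> A" "W \<subseteq> B" for V W
      using that assms(3) by auto
    then show "(\<lambda>(V, W). V \<union> W) ` ({V. V \<subseteq> A \<and> card V = j} \<times> {W. W \<subseteq> B \<and> card W = l})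
        \<subseteq> {U. U \<subseteq> A \<union> B \<and> card (U \<inter> A) = j \<and> card (U \<inter> B) = l}"
      and "\<forall>p\<in>{V. V \<subseteq> A \<and> card V = j} \<times> {W. W \<subseteq> B \<and> card W = l}.
        (\<lambda>U. (U \<inter> A, U \<inter> B)) ((\<lambda>(V, W). V \<union> W) p) = p"
      by auto
  qed auto
  then show ?thesis
    using assms by (simp add: bij_betw_same_card[symmetric] card_cartesian_product n_subsets)
qed

lemma sum_subsets_by_parts:
  fixes f :: "nat \<Rightarrow> nat \<Rightarrow> 'b::comm_semiring_1"
  assumes "finite A" "finite B" "A \<inter> B = {}"
  shows "(\<Sum>U | U \<subseteq> A \<union> B \<and> card U \<le> n. f (card (U \<inter> A)) (card (U \<inter> B)))
       = (\<Sum>(j, l) | j + l \<le> n. of_nat ((card A choose j) * (card B choose l)) * f j l)"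
proof -
  let ?S = "{U. U \<subseteq> A \<union> B \<and> card U \<le> n}" and ?I = "{(j, l). j + l \<le> n}"
  let ?parts = "\<lambda>U. (card (U \<inter> A), card (U \<inter> B))"
  have card_U: "card U = card (U \<inter> A) + card (U \<inter> B)" if "U \<subseteq> A \<union> B" for U
  proof -
    have "U = (U \<inter> A) \<union> (U \<inter> B)" using that by blast
    moreover have "finite U" using that assms by (auto intro: finite_subset)
    ultimately show ?thesis using assms(3) by (metis card_Un_disjoint finite_Int inf_assoc
          inf_bot_right inf_commute inf_left_commute)
  qed
  have fiber: "{U \<in> ?S. ?parts U = (j, l)} =
      {U. U \<subseteq> A \<union> B \<and> card (U \<inter> A) = j \<and> card (U \<inter> B) = l}" if "(j, l) \<in> ?I" for j l
    using that card_U by auto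
  have "finite ?S" using assms by (auto intro: finite_subset[of _ "Pow (A \<union> B)"])
  moreover have "finite ?I" by (rule finite_subset[of _ "{..n} \<times> {..n}"]) auto
  moreover have "?parts ` ?S \<subseteq> ?I" using card_U by auto
  ultimately have "(\<Sum>U\<in>?S. f (card (U \<inter> A)) (card (U \<inter> B)))
      = (\<Sum>p\<in>?I. \<Sum>U\<in>{U \<in> ?S. ?parts U = p}. f (card (U \<inter> A)) (card (U \<inter> B)))"
    by (rule sum.group[symmetric])
  also have "\<dots> = (\<Sum>(j, l)\<in>?I. of_nat ((card A choose j) * (card B choose l)) * f j l)"
  proof (rule sum.cong[OF refl])
    fix p assume "p \<in> ?I"
    moreover obtain j l where p: "p = (j, l)" by fastforce
    ultimately have jl: "(j, l) \<in> ?I" by simp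
    have "(\<Sum>U\<in>{U \<in> ?S. ?parts U = p}. f (card (U \<inter> A)) (card (U \<inter> B)))
        = (\<Sum>U\<in>{U \<in> ?S. ?parts U = (j, l)}. f j l)" by (rule sum.cong) (auto simp: p)
    also have "\<dots> = of_nat ((card A choose j) * (card B choose l)) * f j l"
      unfolding fiber[OF jl] using card_subsets_by_parts[OF assms, of j l] by simp
    finally show "(\<Sum>U\<in>{U \<in> ?S. ?parts U = p}. f (card (U \<inter> A)) (card (U \<inter> B)))
        = (case p of (j, l) \<Rightarrow> of_nat ((card A choose j) * (card B choose l)) * f j l)"
      by (simp add: p)
  qed
  finally show ?thesis by simp
qed

text \<open>The generating polynomial of the ways to attach a new element twice to a partition
  with a singleton and b doubleton blocks: j singletons and l doubletons receive x
  (j + l \<le> 2), or x is added to both copies of one doubleton.\<close>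
definition growth_poly :: "nat \<Rightarrow> nat \<Rightarrow> real \<Rightarrow> real \<Rightarrow> real" where
  "growth_poly a b z1 z2 =
     (\<Sum>(j, l) | j + l \<le> 2. of_nat ((a choose j) * (b choose l))
        * (z1 ^ (a + 2 * l + of_bool (j + l = 1)) * z2 ^ (b - l + of_bool (j + l = 0))))
     + real b * (z1 ^ a * z2 ^ b)"

lemma sum_attach_choices:
  fixes w :: "'a set multiset \<Rightarrow> 'b::comm_monoid_add"
  assumes le2: "\<forall>S. count \<rho> S \<le> 2"
  shows "(\<Sum>X\<in>attach_choices \<rho>. w X) =
    (\<Sum>U | U \<subseteq> set_mset \<rho> \<and> card U \<le> 2. w (mset_set U)) + (\<Sum>B\<in>mult_blocks 2 \<rho>. w {#B, B#})"
proof -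
  let ?sets = "{U. U \<subseteq> set_mset \<rho> \<and> card U \<le> 2}"
  have fin_sets: "finite ?sets" by (rule finite_subset[of _ "Pow (set_mset \<rho>)"]) auto
  have inj_sets: "inj_on mset_set ?sets"
    by (rule inj_onI) (metis (mono_tags, lifting) finite_set_mset finite_subset mem_Collect_eq
        mset_set_eq_iff)
  have inj_double: "inj_on (\<lambda>B. {#B, B#}) (mult_blocks 2 \<rho>)"
    by (rule inj_onI) (drule arg_cong[where f = set_mset], simp)
  have "mset_set U \<noteq> {#B, B#}" for U and B :: "'a set"
  proof
    assume "mset_set U = {#B, B#}"
    then have "count (mset_set U) B = 2" by simp
    then show False by (simp add: count_mset_set' split: if_splits)
  qed
  then have "mset_set ` ?sets \<inter> (\<lambda>B. {#B, B#}) ` mult_blocks 2 \<rho> = {}" by blast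
  then have "(\<Sum>X\<in>attach_choices \<rho>. w X)
      = sum w (mset_set ` ?sets) + sum w ((\<lambda>B. {#B, B#}) ` mult_blocks 2 \<rho>)"
    unfolding attach_choices_split[OF le2]
    by (intro sum.union_disjoint finite_imageI fin_sets finite_mult_blocks)
  then show ?thesis by (simp add: sum.reindex[OF inj_sets] sum.reindex[OF inj_double])
qed

lemma attach_weight_sum:
  assumes \<rho>: "\<rho> \<in> mset_set_partitions M" and x: "x \<notin># M" and M: "\<forall>y. count M y \<le> 2"
  shows "(\<Sum>X\<in>attach_choices \<rho>. z1 ^ mult_count 1 (attach x \<rho> X) * z2 ^ mult_count 2 (attach x \<rho> X))
       = growth_poly (mult_count 1 \<rho>) (mult_count 2 \<rho>) z1 z2"
proof -
  define a where "a = mult_count 1 \<rho>"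
  define b where "b = mult_count 2 \<rho>"
  define f where "f j l = z1 ^ (a + 2 * l + of_bool (j + l = 1)) * z2 ^ (b - l + of_bool (j + l = 0))"
    for j l
  have blocks: "\<forall>S\<in>#\<rho>. S \<noteq> {} \<and> x \<notin> S" using \<rho> x by (rule partition_blocks_avoid)
  have le2: "\<forall>S. count \<rho> S \<le> 2" using \<rho> M by (rule partition_count_le)
  have "(\<Sum>U | U \<subseteq> set_mset \<rho> \<and> card U \<le> 2.
          z1 ^ mult_count 1 (attach x \<rho> (mset_set U)) * z2 ^ mult_count 2 (attach x \<rho> (mset_set U)))
      = (\<Sum>U | U \<subseteq> set_mset \<rho> \<and> card U \<le> 2.
          f (card (U \<inter> mult_blocks 1 \<rho>)) (card (U \<inter> mult_blocks 2 \<rho>)))"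
  proof (rule sum.cong[OF refl])
    fix U assume "U \<in> {U. U \<subseteq> set_mset \<rho> \<and> card U \<le> 2}"
    then show "z1 ^ mult_count 1 (attach x \<rho> (mset_set U)) * z2 ^ mult_count 2 (attach x \<rho> (mset_set U))
        = f (card (U \<inter> mult_blocks 1 \<rho>)) (card (U \<inter> mult_blocks 2 \<rho>))"
      using mult_count_attach_set[OF blocks le2, of U] by (simp add: f_def a_def b_def)
  qed
  also have "\<dots> = (\<Sum>(j, l) | j + l \<le> 2. of_nat ((a choose j) * (b choose l)) * f j l)"
    unfolding set_mset_mult_blocks[OF le2] a_def b_def mult_count_eq_card
    by (rule sum_subsets_by_parts) (auto simp: finite_mult_blocks mult_blocks_def)
  moreover have "(\<Sum>B\<in>mult_blocks 2 \<rho>.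
          z1 ^ mult_count 1 (attach x \<rho> {#B, B#}) * z2 ^ mult_count 2 (attach x \<rho> {#B, B#}))
      = (\<Sum>B\<in>mult_blocks 2 \<rho>. z1 ^ a * z2 ^ b)"
    by (rule sum.cong[OF refl])
       (auto simp: a_def b_def mult_count_attach_double[OF blocks] mult_blocks_2)
  moreover have "(\<Sum>B\<in>mult_blocks 2 \<rho>. z1 ^ a * z2 ^ b) = real b * (z1 ^ a * z2 ^ b)"
    by (simp add: b_def mult_count_eq_card)
  ultimately show ?thesis
    unfolding sum_attach_choices[OF le2] growth_poly_def f_def a_def b_def by simp
qed

section \<open>The differential operator\<close>

lemma deriv_sum_powers_left:
  "deriv (\<lambda>t. \<Sum>i\<in>I. c i * t ^ e i) (x::real) = (\<Sum>i\<in>I. c i * (of_nat (e i) * x ^ (e i - 1)))"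
  by (rule DERIV_imp_deriv) (auto intro!: derivative_eq_intros simp: mult_ac)

lemma deriv_sum_powers_right:
  "deriv (\<lambda>t. \<Sum>i\<in>I. t ^ e i * c i) (x::real) = (\<Sum>i\<in>I. c i * (of_nat (e i) * x ^ (e i - 1)))"
  by (rule DERIV_imp_deriv) (auto intro!: derivative_eq_intros simp: mult.commute)

lemma real_choose_two: "real (n choose 2) = real n * (real n - 1) / 2"
proof (cases n)
  case (Suc m)
  have "even (n * (n - 1))" using Suc by auto
  then have "real (n choose 2) = real (n * (n - 1)) / 2"
    unfolding choose_two by (simp add: real_of_nat_div)
  then show ?thesis using Suc by (simp add: of_nat_diff algebra_simps)
qed simp

lemma growth_poly_expanded:
  "growth_poly a b z1 z2 = z1 ^ a * z2 ^ (b + 1) + real a * (z1 ^ (a + 1) * z2 ^ b)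
      + real b * (z1 ^ (a + 3) * z2 ^ (b - 1)) + real (a choose 2) * (z1 ^ a * z2 ^ b)
      + real a * real b * (z1 ^ (a + 2) * z2 ^ (b - 1))
      + real (b choose 2) * (z1 ^ (a + 4) * z2 ^ (b - 2)) + real b * (z1 ^ a * z2 ^ b)"
proof -
  have pairs: "{(j, l). j + l \<le> (2::nat)} = {(0, 0), (1, 0), (0, 1), (2, 0), (1, 1), (0, 2)}"
    by auto
  show ?thesis by (simp add: growth_poly_def pairs power_add mult_ac power2_eq_square power3_eq_cube)
qed

text \<open>It coincides with the operator applied to the monomial z1^a z2^b, written in the
  form in which the derivatives come out.  Distinguishing a, b \<in> {0, 1, \<ge> 2} removes
  the truncated subtractions in the exponents; what remains is ring normalisation.\<close>
lemma growth_poly_derivative_form: "growth_poly a b z1 z2 =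
      z2 * (z1 ^ a * (real b * z2 ^ (b - 1)))
    + 1 / 2 * z1 ^ 4 * ((z1 ^ a * real b) * (real (b - 1) * z2 ^ (b - 1 - 1)))
    + z1 ^ 3 * ((real b * z2 ^ (b - 1)) * (real a * z1 ^ (a - 1)))
    + 1 / 2 * z1 ^ 2 * ((z2 ^ b * real a) * (real (a - 1) * z1 ^ (a - 1 - 1)))
    + z1 ^ 3 * (z1 ^ a * (real b * z2 ^ (b - 1)))
    + z1 ^ 2 * (z2 ^ b * (real a * z1 ^ (a - 1)))
    + z2 * (z1 ^ a * z2 ^ b)"
proof -
  have "a = 0 \<or> a = 1 \<or> (\<exists>k. a = k + 2)" "b = 0 \<or> b = 1 \<or> (\<exists>k. b = k + 2)" by presburger+
  then show ?thesis
    unfolding growth_poly_expanded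
    apply (elim disjE exE)
    apply (simp_all add: real_choose_two power_add)
    apply (simp_all add: field_simps)
    apply (((thin_tac "_ = _")+)?, algebra)+
    done
qed

text \<open>The operator is linear, so applied to a sum of monomials u^p v^q it gives the sum of
  the corresponding polynomials growth_poly p q.\<close>
lemma D2op_sum_monomials:
  "D2op (\<lambda>u v. \<Sum>i\<in>I. u ^ p i * v ^ q i) z1 z2 = (\<Sum>i\<in>I. growth_poly (p i) (q i) z1 z2)"
proof -
  have d2: "deriv (\<lambda>s. \<Sum>i\<in>I. u ^ p i * s ^ q i) t
      = (\<Sum>i\<in>I. u ^ p i * (real (q i) * t ^ (q i - 1)))" for u t
    by (rule deriv_sum_powers_left)
  have d1: "deriv (\<lambda>v. \<Sum>i\<in>I. v ^ p i * w ^ q i) u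
      = (\<Sum>i\<in>I. w ^ q i * (real (p i) * u ^ (p i - 1)))" for w u
    by (rule deriv_sum_powers_right)
  have e2: "(\<lambda>t. deriv (\<lambda>s. \<Sum>i\<in>I. z1 ^ p i * s ^ q i) t)
      = (\<lambda>t. \<Sum>i\<in>I. (z1 ^ p i * real (q i)) * t ^ (q i - 1))"
    by (rule ext) (simp only: d2 mult.assoc)
  have e3: "(\<lambda>u. deriv (\<lambda>t. \<Sum>i\<in>I. u ^ p i * t ^ q i) z2)
      = (\<lambda>u. \<Sum>i\<in>I. u ^ p i * (real (q i) * z2 ^ (q i - 1)))"
    by (rule ext) (simp only: d2)
  have e5: "(\<lambda>u. deriv (\<lambda>v. \<Sum>i\<in>I. v ^ p i * z2 ^ q i) u)
      = (\<lambda>u. \<Sum>i\<in>I. (z2 ^ q i * real (p i)) * u ^ (p i - 1))"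
    by (rule ext) (simp only: d1 mult.assoc)
  show ?thesis
    unfolding D2op_def e2 e3 e5 deriv_sum_powers_left deriv_sum_powers_right d1 d2
      growth_poly_derivative_form
    by (simp only: sum_distrib_left sum.distrib mult.assoc)
qed

section \<open>The recursion for P2\<close>

lemma double_mset_Suc: "double_mset (Suc m) = double_mset m + {#Suc m, Suc m#}"
  unfolding double_mset_def by (simp add: atLeastAtMostSuc_conv add.commute)

lemma count_double_mset: "count (double_mset m) y = (if 1 \<le> y \<and> y \<le> m then 2 else 0)"
  by (induction m) (auto simp: double_mset_Suc double_mset_def)

lemma P2_Suc: "P2 (Suc m) z1 z2 = D2op (P2 m) z1 z2"
proof -
  let ?M = "double_mset m" and ?x = "Suc m"
  have x: "?x \<notin># ?M" by (simp add: not_in_iff count_double_mset)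
  have le2: "\<forall>y. count ?M y \<le> 2" by (simp add: count_double_mset)
  have "P2 (Suc m) z1 z2 = (\<Sum>\<pi>\<in>mset_set_partitions (?M + {#?x, ?x#}).
      z1 ^ mult_count 1 \<pi> * z2 ^ mult_count 2 \<pi>)"
    unfolding P2_def double_mset_Suc ..
  also have "\<dots> = (\<Sum>\<rho>\<in>mset_set_partitions ?M. \<Sum>X\<in>attach_choices \<rho>.
      z1 ^ mult_count 1 (attach ?x \<rho> X) * z2 ^ mult_count 2 (attach ?x \<rho> X))"
    by (rule sum_partitions_add_pair[OF x])
  also have "\<dots> = (\<Sum>\<rho>\<in>mset_set_partitions ?M. growth_poly (mult_count 1 \<rho>) (mult_count 2 \<rho>) z1 z2)"
    by (rule sum.cong[OF refl]) (rule attach_weight_sum[OF _ x le2])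
  also have "\<dots> = D2op (P2 m) z1 z2"
    unfolding D2op_sum_monomials[symmetric] P2_def ..
  finally show ?thesis .
qed

theorem mainTheorem1:
  shows "P2 0 = (\<lambda>z1 z2. 1)
    \<and> (\<forall>n\<ge>1. \<forall>z1 z2. P2 n z1 z2 = D2op (P2 (n - 1)) z1 z2)
    \<and> (\<forall>n. finite (mset_set_partitions (double_mset n))
           \<and> real (card (mset_set_partitions (double_mset n))) = P2 n 1 1)"
proof (intro conjI allI impI)
  show "P2 0 = (\<lambda>z1 z2. 1)"
    by (intro ext) (simp add: P2_def double_mset_def mset_set_partitions_empty mult_count_def)
next
  fix n :: nat and z1 z2 :: real assume "n \<ge> 1"
  then show "P2 n z1 z2 = D2op (P2 (n - 1)) z1 z2"
    using P2_Suc[of "n - 1"] by simp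
next
  fix n :: nat
  show "finite (mset_set_partitions (double_mset n))" by (rule finite_mset_set_partitions)
  show "real (card (mset_set_partitions (double_mset n))) = P2 n 1 1" by (simp add: P2_def)
qed

end
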